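(* Let $\mathcal F_1$ and $\mathcal F_2$ be completely positive maps on $M_D$ with spectral radius $1$, where $\mathcal F_1$ is trace-preserving with $\tau(\mathcal F_1)<1$. Let $\rho_1$ be the unique density matrix fixed by $\mathcal F_1$, and let $\mathcal Z_1$ be the fundamental channel of $\mathcal F_1$. Let $\xi$ satisfy $\mathcal F_2^\dagger(\xi)=\xi$ and $\mathrm{Tr}(\rho_1\xi)=1$. If $\|\mathcal Z_1\|_{1\to1}\|\mathcal F_1-\mathcal F_2\|_{1\to1}<1$, then $$\|\mathbb 1-\xi\|_\infty\le\frac{\|\mathcal Z_1\|_{1\to1}\|\mathcal F_1-\mathcal F_2\|_{1\to1}}{1-\|\mathcal Z_1\|_{1\to1}\|\mathcal F_1-\mathcal F_2\|_{1\to1}}.$$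
   Context: Notation: $M_D$ is the space of complex $D\times D$ matrices, $\|\cdot\|_p$ is the Schatten $p$-norm, and $\|\mathcal F\|_{1\to1}:=\sup_{\sigma\ne0}\|\mathcal F(\sigma)\|_1/\|\sigma\|_1$ for a linear map $\mathcal F$ on $M_D$. The dual map $\mathcal F^\dagger$ is defined by $\mathrm{Tr}(A\,\mathcal F(B))=\mathrm{Tr}(\mathcal F^\dagger(A)B)$. The ergodicity coefficient is $\tau(\mathcal F):=\sup\{\|\mathcal F(\sigma)\|_1/\|\sigma\|_1:\ 0\ne\sigma,\ \mathrm{Tr}\,\sigma=0\}$. Fundamental channel: for a completely positive trace-preserving map $\mathcal F$ with $\tau(\mathcal F)<1$ and unique fixed density matrix $\rho$, let $\mathcal F^\infty(X):=\mathrm{Tr}(X)\,\rho$, which equals $\lim_{k\to\infty}\mathcal F^k$. The fundamental channel of $\mathcal F$ is $\mathcal Z:=(\mathrm{id}-\mathcal F+\mathcal F^\infty)^{-1}$. *)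

theory Defs
  imports "HOL-Analysis.Analysis"
begin

text \<open>M_D is modelled as the type complex^'n^'n with D = CARD('n).\<close>

type_synonym 'n cmat = "complex^'n^'n"

definition cscale :: "complex \<Rightarrow> 'n::finite cmat \<Rightarrow> 'n cmat" where
  "cscale c A = (\<chi> i j. c * A$i$j)"

definition adj :: "'n::finite cmat \<Rightarrow> 'n cmat" where
  "adj A = (\<chi> i j. cnj (A$j$i))"

definition clinear_map :: "('n::finite cmat \<Rightarrow> 'n cmat) \<Rightarrow> bool" where
  "clinear_map F \<longleftrightarrow> (\<forall>A B. F (A + B) = F A + F B) \<and> (\<forall>c A. F (cscale c A) = cscale c (F A))"

definition psd :: "'n::finite cmat \<Rightarrow> bool" where
  "psd A \<longleftrightarrow> (\<forall>v::complex^'n. let q = (\<Sum>i\<in>UNIV. cnj (v$i) * (A *v v)$i) in Im q = 0 \<and> Re q \<ge> 0)"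

definition density :: "'n::finite cmat \<Rightarrow> bool" where
  "density A \<longleftrightarrow> psd A \<and> trace A = 1"

text \<open>positivity of a block matrix (X_ij)_{i,j<k} in M_k(M_D) = M_k \<otimes> M_D\<close>
definition block_psd :: "nat \<Rightarrow> (nat \<Rightarrow> nat \<Rightarrow> 'n::finite cmat) \<Rightarrow> bool" where
  "block_psd k X \<longleftrightarrow> (\<forall>v :: nat \<Rightarrow> complex^'n.
     let q = (\<Sum>i<k. \<Sum>j<k. \<Sum>a\<in>UNIV. cnj (v i $ a) * (X i j *v v j) $ a) in Im q = 0 \<and> Re q \<ge> 0)"

definition completely_positive :: "('n::finite cmat \<Rightarrow> 'n cmat) \<Rightarrow> bool" where
  "completely_positive F \<longleftrightarrow> clinear_map F \<and>
     (\<forall>k X. block_psd k X \<longrightarrow> block_psd k (\<lambda>i j. F (X i j)))"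

definition trace_preserving :: "('n::finite cmat \<Rightarrow> 'n cmat) \<Rightarrow> bool" where
  "trace_preserving F \<longleftrightarrow> (\<forall>X. trace (F X) = trace X)"

definition spectral_radius_map :: "('n::finite cmat \<Rightarrow> 'n cmat) \<Rightarrow> real" where
  "spectral_radius_map F = Sup {cmod c | c. \<exists>X. X \<noteq> 0 \<and> F X = cscale c X}"

definition trace_norm :: "'n::finite cmat \<Rightarrow> real" where
  "trace_norm A = Re (trace (THE P. psd P \<and> P ** P = adj A ** A))"

text \<open>Schatten infinity-norm: largest singular value = operator norm\<close>
definition schatten_inf :: "'n::finite cmat \<Rightarrow> real" where
  "schatten_inf A = onorm (\<lambda>x::complex^'n. A *v x)"

definition norm_11 :: "('n::finite cmat \<Rightarrow> 'n cmat) \<Rightarrow> real" where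
  "norm_11 F = Sup {trace_norm (F s) / trace_norm s | s. s \<noteq> 0}"

definition ergodicity_coeff :: "('n::finite cmat \<Rightarrow> 'n cmat) \<Rightarrow> real" where
  "ergodicity_coeff F = Sup {trace_norm (F s) / trace_norm s | s. s \<noteq> 0 \<and> trace s = 0}"

definition dual_map :: "('n::finite cmat \<Rightarrow> 'n cmat) \<Rightarrow> 'n cmat \<Rightarrow> 'n cmat" where
  "dual_map F A = (THE B. \<forall>X. trace (A ** F X) = trace (B ** X))"

text \<open>F^\<infinity>(X) = Tr(X) \<rho>, \<rho> the unique fixed density matrix\<close>
definition limit_channel :: "'n::finite cmat \<Rightarrow> 'n cmat \<Rightarrow> 'n cmat" where
  "limit_channel \<rho> X = cscale (trace X) \<rho>"

definition fundamental_channel :: "('n::finite cmat \<Rightarrow> 'n cmat) \<Rightarrow> 'n cmat \<Rightarrow> 'n cmat \<Rightarrow> 'n cmat" where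
  "fundamental_channel F \<rho> = inv (\<lambda>X. X - F X + limit_channel \<rho> X)"

end

theory Submission
  imports Defs
begin

text \<open>
  The fundamental channel Z inverts the generator X \<mapsto> X - F1 X + Tr(X) \<rho>1, which is injective
  because an element of its kernel is a traceless fixed point of F1, and \<tau>(F1) < 1 rules those out.
  Writing R = W - F1 W + Tr(W) \<rho>1 with W = Z R, the facts that the dual of F2 fixes \<xi>, that F1 is
  trace preserving and that Tr(\<rho>1 \<xi>) = 1 give Tr((1 - \<xi>) R) = Tr(\<xi> (F1 - F2)(Z R)) for every R.
  H\<ouml>lder's inequality |Tr(M Y)| \<le> \<parallel>M\<parallel>_\<infinity> \<parallel>Y\<parallel>_1 bounds this by \<parallel>\<xi>\<parallel>_\<infinity> a b \<parallel>R\<parallel>_1 with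
  a = \<parallel>Z\<parallel>_{1\<rightarrow>1}, b = \<parallel>F1 - F2\<parallel>_{1\<rightarrow>1}, and \<parallel>\<xi>\<parallel>_\<infinity> \<le> 1 + s for s = \<parallel>1 - \<xi>\<parallel>_\<infinity>. Testing with
  rank-one R turns this into s \<le> (1 + s) a b, which rearranges to the claim.

  The trace norm \<parallel>Y\<parallel>_1 is Tr of the positive square root of Y^* Y; evaluating it in an
  orthonormal eigenbasis of Y^* Y (spectral theorem for Hermitian matrices, proved by maximising
  the Rayleigh quotient) and using uniqueness of positive square roots gives
  \<parallel>Y\<parallel>_1 = \<Sum>_e \<parallel>Y e\<parallel>, from which H\<ouml>lder's inequality follows.
\<close>

section \<open>Hermitian inner product and positive semidefinite matrices\<close>

definition cinner :: "complex^'n::finite \<Rightarrow> complex^'n \<Rightarrow> complex" where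
  "cinner u v = (\<Sum>i\<in>UNIV. cnj (u$i) * v$i)"

lemma cinner_add_left: "cinner (u + v) w = cinner u w + cinner v w"
  by (simp add: cinner_def distrib_right sum.distrib)

lemma cinner_add_right: "cinner u (v + w) = cinner u v + cinner u w"
  by (simp add: cinner_def distrib_left sum.distrib)

lemma cinner_diff_right: "cinner u (v - w) = cinner u v - cinner u w"
  by (simp add: cinner_def right_diff_distrib sum_subtractf)

lemma cinner_smult_left: "cinner (c *s u) v = cnj c * cinner u v"
  by (simp add: cinner_def sum_distrib_left algebra_simps)

lemma cinner_smult_right: "cinner u (c *s v) = c * cinner u v"
  by (simp add: cinner_def sum_distrib_left algebra_simps)

lemma cinner_scaleR_left: "cinner ((r::real) *\<^sub>R u) v = of_real r * cinner u v"
  by (simp add: cinner_def sum_distrib_left algebra_simps scaleR_conv_of_real[where 'a=complex])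

lemma cinner_scaleR_right: "cinner u ((r::real) *\<^sub>R v) = of_real r * cinner u v"
  by (simp add: cinner_def sum_distrib_left algebra_simps scaleR_conv_of_real[where 'a=complex])

lemma cinner_zero_right [simp]: "cinner u 0 = 0"
  by (simp add: cinner_def)

lemma cinner_sum_right: "finite K \<Longrightarrow> cinner u (\<Sum>k\<in>K. f k) = (\<Sum>k\<in>K. cinner u (f k))"
  by (induct K rule: finite_induct) (auto simp: cinner_add_right)

lemma cinner_commute: "cinner v u = cnj (cinner u v)"
  by (simp add: cinner_def mult.commute)

lemma norm_vec_square: "(norm (x::'a::real_normed_vector^'n::finite))\<^sup>2 = (\<Sum>i\<in>UNIV. (norm (x$i))\<^sup>2)"
  by (simp add: norm_vec_def L2_set_def sum_nonneg)

lemma cinner_self: "cinner x x = of_real ((norm x)\<^sup>2)"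
proof -
  have "cinner x x = (\<Sum>i\<in>UNIV. complex_of_real ((cmod (x$i))\<^sup>2))"
    unfolding cinner_def
    by (rule sum.cong) (auto simp: complex_norm_square mult.commute simp del: of_real_power)
  then show ?thesis
    by (simp add: norm_vec_square del: of_real_power)
qed

lemma norm_cinner_le: "cmod (cinner u v) \<le> norm u * norm v"
proof -
  have "cmod (cinner u v) \<le> (\<Sum>i\<in>UNIV. cmod (u$i) * cmod (v$i))"
    unfolding cinner_def by (rule order_trans[OF norm_sum]) (simp add: norm_mult)
  also have "\<dots> \<le> L2_set (\<lambda>i. cmod (u$i)) UNIV * L2_set (\<lambda>i. cmod (v$i)) UNIV"
    using L2_set_mult_ineq[of "\<lambda>i. cmod (u$i)" "\<lambda>i. cmod (v$i)" UNIV] by simp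
  finally show ?thesis
    by (simp add: norm_vec_def)
qed

lemma cinner_adj: "cinner u (A *v v) = cinner (adj A *v u) v"
proof -
  have "cinner u (A *v v) = (\<Sum>i\<in>UNIV. \<Sum>j\<in>UNIV. cnj (u$i) * A$i$j * v$j)"
    by (simp add: cinner_def matrix_vector_mult_def sum_distrib_left mult.assoc)
  also have "\<dots> = (\<Sum>j\<in>UNIV. \<Sum>i\<in>UNIV. cnj (u$i) * A$i$j * v$j)"
    by (rule sum.swap)
  also have "\<dots> = cinner (adj A *v u) v"
    by (simp add: cinner_def adj_def matrix_vector_mult_def sum_distrib_left sum_distrib_right ac_simps)
  finally show ?thesis .
qed

lemma cinner_axis_left: "cinner (axis i 1) w = w$i"
proof -
  have "cinner (axis i 1) w = (\<Sum>k\<in>UNIV. if k = i then w$k else 0)"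
    unfolding cinner_def axis_def by (rule sum.cong) auto
  then show ?thesis
    by simp
qed

lemma matrix_vector_mult_axis_nth: "(A *v axis j 1) $ i = A$i$j"
  by (simp add: matrix_vector_mult_def axis_def if_distrib cong: if_cong)

lemma matrix_vector_mult_scaleR_complex: "A *v ((r::real) *\<^sub>R v) = r *\<^sub>R (A *v (v::complex^'n::finite))"
  by (simp add: vec_eq_iff matrix_vector_mult_def sum_distrib_left algebra_simps scaleR_conv_of_real[where 'a=complex])

lemma adj_adj [simp]: "adj (adj A) = A"
  by (simp add: adj_def vec_eq_iff)

lemma adj_mult: "adj (A ** B) = adj B ** adj A"
  by (simp add: adj_def vec_eq_iff matrix_matrix_mult_def mult.commute)

lemma adj_diff: "adj (A - B) = adj A - adj B"
  by (simp add: adj_def vec_eq_iff)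

lemma psd_iff_cinner: "psd A \<longleftrightarrow> (\<forall>v. Im (cinner v (A *v v)) = 0 \<and> Re (cinner v (A *v v)) \<ge> 0)"
  by (simp add: psd_def cinner_def Let_def)

lemma hermitian_form_real:
  assumes "adj A = A"
  shows "Im (cinner v (A *v v)) = 0"
proof -
  have "cinner v (A *v v) = cnj (cinner v (A *v v))"
    by (metis cinner_adj cinner_commute assms)
  then show ?thesis
    by (metis cnj.simps(2) complex.expand neg_equal_zero)
qed

lemma psd_hermitian:
  assumes "psd A"
  shows "adj A = A"
proof -
  let ?h = "\<lambda>u v. cinner u (A *v v)"
  have form_real: "Im (?h v v) = 0" for v
    using assms by (simp add: psd_iff_cinner)
  have expand: "?h (u + w) (u + w) = ?h u u + ?h u w + ?h w u + ?h w w" for u w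
    by (simp add: cinner_add_left cinner_add_right matrix_vector_right_distrib)
  \<comment> \<open>polarization with the vectors u + v and u + i v\<close>
  have conj_sym: "?h u v = cnj (?h v u)" for u v
  proof -
    have im: "Im (?h u v + ?h v u) = 0"
      using form_real[of "u + v"] form_real[of u] form_real[of v] expand[of u v] by simp
    have i: "?h u (\<i> *s v) = \<i> * ?h u v" "?h (\<i> *s v) u = - \<i> * ?h v u"
      by (simp_all add: vector_scalar_commute cinner_smult_right cinner_smult_left)
    have "Im (?h u (\<i> *s v) + ?h (\<i> *s v) u) = 0"
      using form_real[of "u + \<i> *s v"] form_real[of u] form_real[of "\<i> *s v"] expand[of u "\<i> *s v"] by simp
    then have "Re (?h u v) = Re (?h v u)"
      unfolding i by simp
    with im show ?thesis
      by (simp add: complex_eq_iff)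
  qed
  show ?thesis
  proof (simp add: vec_eq_iff, intro allI)
    fix i j
    have "A$i$j = ?h (axis i 1) (axis j 1)"
      by (simp add: cinner_axis_left matrix_vector_mult_axis_nth)
    also have "\<dots> = cnj (?h (axis j 1) (axis i 1))"
      by (rule conj_sym)
    also have "\<dots> = cnj (A$j$i)"
      by (simp add: cinner_axis_left matrix_vector_mult_axis_nth)
    finally show "adj A $ i $ j = A $ i $ j"
      by (simp add: adj_def)
  qed
qed

lemma quadratic_nonneg_imp_linear_coeff_zero:
  fixes a b :: real
  assumes "\<And>t. 0 \<le> t\<^sup>2 * b - 2 * t * a"
  shows "a = 0"
proof (rule ccontr)
  assume "a \<noteq> 0"
  define c where "c = \<bar>b\<bar> + 1"
  have "c > 0" "b < 2 * c"
    by (auto simp: c_def)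
  define t where "t = a / c"
  have "t\<^sup>2 * b - 2 * t * a = a\<^sup>2 * (b - 2 * c) / c\<^sup>2"
    using \<open>c > 0\<close> by (simp add: t_def field_simps power2_eq_square)
  moreover have "a\<^sup>2 * (b - 2 * c) < 0"
    using \<open>a \<noteq> 0\<close> \<open>b < 2 * c\<close> by (intro mult_pos_neg) auto
  then have "a\<^sup>2 * (b - 2 * c) / c\<^sup>2 < 0"
    using \<open>c > 0\<close> by (simp add: divide_neg_pos)
  ultimately show False
    using assms[of t] by linarith
qed

lemma hermitian_form_zero_imp_kernel:
  fixes B :: "'n::finite cmat"
  assumes herm: "adj B = B" and S: "subspace S"
    and nonneg: "\<And>u. u \<in> S \<Longrightarrow> 0 \<le> Re (cinner u (B *v u))"
    and v: "v \<in> S" and Bv: "B *v v \<in> S" and zero: "Re (cinner v (B *v v)) = 0"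
  shows "B *v v = 0"
proof -
  define w where "w = B *v v"
  \<comment> \<open>the quadratic polynomial t \<mapsto> q (v + t w) is nonnegative and vanishes at 0, so its
    linear coefficient, twice the squared norm of w, vanishes\<close>
  have vw: "cinner v (B *v w) = cinner w w"
    by (metis cinner_adj herm w_def)
  have "Re (cinner (v + t *\<^sub>R w) (B *v (v + t *\<^sub>R w))) =
        Re (cinner v (B *v v)) + 2 * t * (norm w)\<^sup>2 + t\<^sup>2 * Re (cinner w (B *v w))" for t
    by (simp add: cinner_add_left cinner_add_right matrix_vector_right_distrib matrix_vector_mult_scaleR_complex
        cinner_scaleR_left cinner_scaleR_right vw flip: w_def)
      (simp add: cinner_self power2_eq_square algebra_simps)
  moreover have "v + t *\<^sub>R w \<in> S" for t
    using S v Bv by (simp add: w_def subspace_add subspace_mul)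
  ultimately have "0 \<le> 2 * t * (norm w)\<^sup>2 + t\<^sup>2 * Re (cinner w (B *v w))" for t
    using nonneg zero by fastforce
  from this[of "- t" for t] have "0 \<le> t\<^sup>2 * Re (cinner w (B *v w)) - 2 * t * (norm w)\<^sup>2" for t
    by simp
  then have "(norm w)\<^sup>2 = 0"
    by (rule quadratic_nonneg_imp_linear_coeff_zero)
  then show ?thesis
    by (simp add: w_def)
qed

lemma psd_form_zero_imp_kernel: "psd A \<Longrightarrow> Re (cinner v (A *v v)) = 0 \<Longrightarrow> A *v v = 0"
  by (rule hermitian_form_zero_imp_kernel[where S=UNIV]) (auto simp: psd_hermitian psd_iff_cinner)

section \<open>Spectral theorem for Hermitian matrices\<close>

definition orthonormal_eigenvectors :: "'n::finite cmat \<Rightarrow> (complex^'n) set \<Rightarrow> bool" where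
  "orthonormal_eigenvectors A E \<longleftrightarrow> finite E \<and> (\<forall>e\<in>E. cinner e e = 1)
     \<and> (\<forall>e\<in>E. \<forall>f\<in>E. e \<noteq> f \<longrightarrow> cinner e f = 0) \<and> (\<forall>e\<in>E. A *v e = cinner e (A *v e) *s e)"

definition complete_system :: "(complex^'n::finite) set \<Rightarrow> bool" where
  "complete_system E \<longleftrightarrow> (\<forall>x. x = (\<Sum>e\<in>E. cinner e x *s e))"

lemma orthonormal_eigenvectorsD:
  assumes "orthonormal_eigenvectors A E"
  shows "finite E" and "e \<in> E \<Longrightarrow> cinner e e = 1"
    and "e \<in> E \<Longrightarrow> f \<in> E \<Longrightarrow> e \<noteq> f \<Longrightarrow> cinner e f = 0"
    and "e \<in> E \<Longrightarrow> A *v e = cinner e (A *v e) *s e"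
  using assms by (auto simp: orthonormal_eigenvectors_def)

lemma inner_eq_Re_cinner: "inner u v = Re (cinner u (v::complex^'n::finite))"
  by (simp add: inner_vec_def cinner_def Re_sum inner_complex_def)

lemma card_orthonormal_eigenvectors_le:
  fixes A :: "'n::finite cmat"
  assumes "orthonormal_eigenvectors A E"
  shows "card E \<le> DIM(complex^'n)"
proof -
  have "pairwise orthogonal E"
    using assms by (auto simp: orthonormal_eigenvectors_def pairwise_def orthogonal_def inner_eq_Re_cinner)
  moreover have "0 \<notin> E"
    using assms by (auto simp: orthonormal_eigenvectors_def)
  ultimately have "independent E"
    by (rule pairwise_orthogonal_independent)
  from independent_bound[OF this] show ?thesis
    by simp
qed

lemma continuous_on_quadratic_form: "continuous_on S (\<lambda>u. Re (cinner u (A *v (u::complex^'n::finite))))"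
  unfolding cinner_def
  by (intro continuous_intros continuous_on_compose2[OF continuous_on_cnj]
      matrix_vector_mult_linear_continuous_on) auto

lemma of_real_smult: "complex_of_real r *s v = r *\<^sub>R (v::complex^'n)"
  by (simp add: vec_eq_iff scaleR_conv_of_real[where 'a=complex])

lemma matrix_vector_mult_mat: "mat c *v v = c *s (v::'a::semiring_1^'n::finite)"
  by (simp add: vec_eq_iff matrix_vector_mult_def mat_def if_distrib if_distribR cong: if_cong)

lemma hermitian_eigenvector_in_invariant_subspace:
  fixes A :: "'n::finite cmat"
  assumes herm: "adj A = A" and S: "subspace S" and invariant: "\<And>u. u \<in> S \<Longrightarrow> A *v u \<in> S"
    and r: "r \<in> S" "r \<noteq> 0"
  obtains v where "v \<in> S" "cinner v v = 1" "A *v v = cinner v (A *v v) *s v"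
proof -
  define K where "K = S \<inter> sphere 0 1"
  have "compact K"
    unfolding K_def by (rule closed_Int_compact[OF closed_subspace[OF S] compact_sphere])
  moreover have "(1 / norm r) *\<^sub>R r \<in> K"
    using r S by (simp add: K_def subspace_mul)
  ultimately obtain v where vK: "v \<in> K"
    and vmax: "\<And>y. y \<in> K \<Longrightarrow> Re (cinner y (A *v y)) \<le> Re (cinner v (A *v v))"
    using continuous_attains_sup[of K "\<lambda>u. Re (cinner u (A *v u))"] continuous_on_quadratic_form
    by blast
  have vS: "v \<in> S" and nv: "norm v = 1"
    using vK by (auto simp: K_def)
  define l where "l = Re (cinner v (A *v v))"
  have le: "Re (cinner u (A *v u)) \<le> l * (norm u)\<^sup>2" if "u \<in> S" for u
  proof (cases "u = 0")
    case False
    have "(1 / norm u) *\<^sub>R u \<in> K"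
      using False that S by (simp add: K_def subspace_mul)
    from vmax[OF this] have "Re (cinner u (A *v u)) / (norm u)\<^sup>2 \<le> l"
      by (simp add: l_def matrix_vector_mult_scaleR_complex cinner_scaleR_left cinner_scaleR_right
          power2_eq_square)
    then show ?thesis
      using False by (simp add: divide_le_eq mult.commute)
  qed simp
  \<comment> \<open>the Rayleigh quotient is maximal at v, so l - A is nonnegative on S and isotropic at v\<close>
  define B where "B = mat (of_real l) - A"
  have Bmv: "B *v u = l *\<^sub>R u - A *v u" for u
    by (simp add: B_def matrix_vector_mult_diff_rdistrib matrix_vector_mult_mat of_real_smult)
  have "B *v v = 0"
  proof (rule hermitian_form_zero_imp_kernel[OF _ S])
    show "adj B = B"
      using herm by (simp add: B_def adj_diff) (simp add: adj_def mat_def vec_eq_iff)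
    show "0 \<le> Re (cinner u (B *v u))" if "u \<in> S" for u
      using le[OF that] by (simp add: Bmv cinner_diff_right cinner_scaleR_right cinner_self)
    show "v \<in> S"
      by (fact vS)
    show "B *v v \<in> S"
      unfolding Bmv using S vS invariant[OF vS] by (simp add: subspace_diff subspace_mul)
    show "Re (cinner v (B *v v)) = 0"
      by (simp add: Bmv cinner_diff_right cinner_scaleR_right cinner_self nv l_def)
  qed
  then have Av: "A *v v = l *\<^sub>R v"
    by (simp add: Bmv)
  have "cinner v v = 1"
    using nv by (simp add: cinner_self)
  moreover have "A *v v = cinner v (A *v v) *s v"
    using calculation by (simp add: Av cinner_scaleR_right of_real_smult)
  ultimately show ?thesis
    using that vS by blast
qed

theorem hermitian_spectral_theorem:
  fixes A :: "'n::finite cmat"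
  assumes herm: "adj A = A"
  obtains E where "orthonormal_eigenvectors A E" "complete_system E"
proof -
  have "orthonormal_eigenvectors A {}"
    by (simp add: orthonormal_eigenvectors_def)
  then obtain E where E: "orthonormal_eigenvectors A E"
    and max: "\<And>E'. orthonormal_eigenvectors A E' \<Longrightarrow> card E' \<le> card E"
    using ex_has_greatest_nat[of "orthonormal_eigenvectors A" "{}" card "Suc DIM(complex^'n)"]
      card_orthonormal_eigenvectors_le by (metis le_imp_less_Suc)
  note En = orthonormal_eigenvectorsD[OF E]
  define S where "S = {u. \<forall>e\<in>E. cinner e u = 0}"
  have S: "subspace S"
    by (auto simp: subspace_def S_def cinner_add_right cinner_scaleR_right)
  have invariant: "A *v u \<in> S" if "u \<in> S" for u
  proof -
    have "cinner e (A *v u) = cnj (cinner e (A *v e)) * cinner e u" if "e \<in> E" for e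
      by (metis cinner_adj herm En(4)[OF that] cinner_smult_left)
    then show ?thesis
      using \<open>u \<in> S\<close> by (simp add: S_def)
  qed
  have "complete_system E"
    unfolding complete_system_def
  proof (rule ccontr)
    assume "\<not> (\<forall>x. x = (\<Sum>e\<in>E. cinner e x *s e))"
    then obtain x where "x \<noteq> (\<Sum>e\<in>E. cinner e x *s e)"
      by blast
    then have r0: "x - (\<Sum>e\<in>E. cinner e x *s e) \<noteq> 0"
      by simp
    have "cinner f (\<Sum>e\<in>E. cinner e x *s e) = cinner f x" if "f \<in> E" for f
    proof -
      have "cinner f (\<Sum>e\<in>E. cinner e x *s e) = (\<Sum>e\<in>E. if e = f then cinner e x else 0)"
        unfolding cinner_sum_right[OF En(1)]
        by (rule sum.cong) (auto simp: cinner_smult_right En(2,3) that)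
      then show ?thesis
        using En(1) that by simp
    qed
    then have "x - (\<Sum>e\<in>E. cinner e x *s e) \<in> S"
      by (simp add: S_def cinner_diff_right)
    then obtain v where v: "v \<in> S" "cinner v v = 1" "A *v v = cinner v (A *v v) *s v"
      using hermitian_eigenvector_in_invariant_subspace[OF herm S invariant _ r0] by blast
    have "v \<notin> E"
      using v by (auto simp: S_def)
    moreover have "cinner v e = 0" if "e \<in> E" for e
      using v that cinner_commute[of v e] by (simp add: S_def)
    then have "orthonormal_eigenvectors A (insert v E)"
      using E v by (auto simp: orthonormal_eigenvectors_def S_def)
    ultimately show False
      using max[of "insert v E"] En(1) by simp
  qed
  with E that show ?thesis
    by blast
qed

lemma cinner_orthonormal_expansion:
  assumes "orthonormal_eigenvectors A E" "f \<in> E"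
  shows "cinner f (\<Sum>e\<in>E. c e *s e) = c f"
proof -
  note En = orthonormal_eigenvectorsD[OF assms(1)]
  have "cinner f (\<Sum>e\<in>E. c e *s e) = (\<Sum>e\<in>E. if e = f then c e else 0)"
    unfolding cinner_sum_right[OF En(1)]
    by (rule sum.cong) (auto simp: cinner_smult_right En(2,3) assms(2))
  then show ?thesis
    using En(1) assms(2) by simp
qed

lemma trace_expansion:
  assumes "finite E" "complete_system E"
  shows "trace M = (\<Sum>e\<in>E. cinner e (M *v e))"
proof -
  have delta: "(\<Sum>e\<in>E. cnj (e$j) * e$i) = (if i = j then 1 else 0)" for i j
  proof -
    have "axis j 1 = (\<Sum>e\<in>E. cinner e (axis j 1) *s e)"
      using assms(2) by (simp add: complete_system_def)
    then have "axis j (1::complex) $ i = (\<Sum>e\<in>E. cnj (e$j) * e$i)"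
      by (metis (no_types, lifting) cinner_axis_left cinner_commute sum.cong sum_component
          vector_smult_component)
    then show ?thesis
      by (simp add: axis_def)
  qed
  have "(\<Sum>e\<in>E. cinner e (M *v e)) = (\<Sum>e\<in>E. \<Sum>i\<in>UNIV. \<Sum>j\<in>UNIV. M$i$j * (cnj (e$i) * e$j))"
    by (simp add: cinner_def matrix_vector_mult_def sum_distrib_left algebra_simps)
  also have "\<dots> = (\<Sum>i\<in>UNIV. \<Sum>j\<in>UNIV. M$i$j * (\<Sum>e\<in>E. cnj (e$i) * e$j))"
    by (simp add: sum_distrib_left sum.swap[of _ E])
  also have "\<dots> = (\<Sum>i\<in>UNIV. \<Sum>j\<in>UNIV. if j = i then M$i$j else 0)"
    by (intro sum.cong refl) (simp add: delta)
  also have "\<dots> = trace M"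
    by (simp add: trace_def)
  finally show ?thesis
    by simp
qed

lemma eigen_expansion:
  assumes "orthonormal_eigenvectors A E" "complete_system E"
  shows "A *v x = (\<Sum>e\<in>E. (cinner e (A *v e) * cinner e x) *s e)"
proof -
  note En = orthonormal_eigenvectorsD[OF assms(1)]
  have "A *v x = A *v (\<Sum>e\<in>E. cinner e x *s e)"
    using assms(2) by (metis complete_system_def)
  also have "\<dots> = (\<Sum>e\<in>E. cinner e x *s (A *v e))"
    by (simp add: vec.sum vector_scalar_commute)
  also have "\<dots> = (\<Sum>e\<in>E. (cinner e (A *v e) * cinner e x) *s e)"
    by (rule sum.cong[OF refl]) (subst En(4), simp_all add: vector_smult_assoc mult.commute)
  finally show ?thesis .
qed

section \<open>Positive square roots and the trace norm\<close>

definition spectral_sum :: "(complex^'n::finite \<Rightarrow> complex) \<Rightarrow> (complex^'n) set \<Rightarrow> 'n cmat" where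
  "spectral_sum g E = (\<chi> i j. \<Sum>e\<in>E. g e * e$i * cnj (e$j))"

lemma spectral_sum_mult_vector:
  "finite E \<Longrightarrow> spectral_sum g E *v x = (\<Sum>e\<in>E. (g e * cinner e x) *s e)"
  by (simp add: vec_eq_iff spectral_sum_def matrix_vector_mult_def cinner_def sum_component
      sum_distrib_left sum_distrib_right sum.swap[of _ E] algebra_simps)

text \<open>For an eigenvector e of C = A - B with eigenvalue g, A^2 = B^2 gives g (a + b) = 0 where
  a = <e, A e> and b = <e, B e>; positivity turns a + b = 0 into A e = B e = 0, so C e = 0.\<close>

lemma psd_sqrt_unique:
  fixes A B :: "'n::finite cmat"
  assumes A: "psd A" and B: "psd B" and eq: "A ** A = B ** B"
  shows "A = B"
proof -
  define C where "C = A - B"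
  have herm: "adj C = C"
    using psd_hermitian[OF A] psd_hermitian[OF B] by (simp add: C_def adj_diff)
  obtain E where E: "orthonormal_eigenvectors C E" and c: "complete_system E"
    using hermitian_spectral_theorem[OF herm] by blast
  have Cv: "C *v y = A *v y - B *v y" for y
    by (simp add: C_def matrix_vector_mult_diff_rdistrib)
  have kernel: "C *v e = 0" if e: "e \<in> E" for e
  proof -
    define g where "g = cinner e (C *v e)"
    have Ce: "C *v e = g *s e"
      unfolding g_def by (rule orthonormal_eigenvectorsD(4)[OF E e])
    have "cnj g = g"
      using hermitian_form_real[OF herm] by (simp add: g_def complex_eq_iff)
    define a where "a = cinner e (A *v e)"
    define b where "b = cinner e (B *v e)"
    have "A *v (C *v e) + C *v (B *v e) = (A ** A) *v e - (B ** B) *v e"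
      by (simp add: Cv matrix_vector_mult_diff_distrib matrix_vector_mul_assoc[symmetric])
    then have "A *v (C *v e) + C *v (B *v e) = 0"
      by (simp add: eq)
    moreover have "cinner e (A *v (C *v e)) = g * a"
      by (simp add: Ce vector_scalar_commute cinner_smult_right a_def)
    moreover have "cinner e (C *v (B *v e)) = g * b"
      by (metis cinner_adj herm Ce cinner_smult_left \<open>cnj g = g\<close> b_def)
    ultimately have "g * (a + b) = 0"
      by (metis cinner_add_right cinner_zero_right distrib_left)
    then consider "g = 0" | "a + b = 0"
      by auto
    then show ?thesis
    proof cases
      case 1
      then show ?thesis
        by (simp add: Ce)
    next
      case 2
      have "Re a \<ge> 0" "Re b \<ge> 0"
        using A B by (auto simp: psd_iff_cinner a_def b_def)
      then have "Re a = 0" "Re b = 0"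
        using 2 by (auto simp: complex_eq_iff)
      then have "A *v e = 0" "B *v e = 0"
        using psd_form_zero_imp_kernel A B a_def b_def by auto
      then show ?thesis
        by (simp add: Cv)
    qed
  qed
  have "C *v x = 0 *v x" for x
    by (simp add: eigen_expansion[OF E c, of x] kernel)
  then have "C = 0"
    by (simp add: matrix_eq)
  then show ?thesis
    by (simp add: C_def)
qed

lemma trace_norm_eqI:
  assumes "psd P" "P ** P = adj Y ** Y"
  shows "trace_norm Y = Re (trace P)"
proof -
  have "(THE P. psd P \<and> P ** P = adj Y ** Y) = P"
  proof (rule the_equality)
    show "psd P \<and> P ** P = adj Y ** Y"
      using assms by simp
    show "Q = P" if "psd Q \<and> Q ** Q = adj Y ** Y" for Q
      using psd_sqrt_unique[of Q P] assms that by simp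
  qed
  then show ?thesis
    by (simp add: trace_norm_def)
qed

lemma trace_norm_eq_sum_norm:
  fixes Y :: "'n::finite cmat"
  assumes E: "orthonormal_eigenvectors (adj Y ** Y) E" and c: "complete_system E"
  shows "trace_norm Y = (\<Sum>e\<in>E. norm (Y *v e))"
proof -
  note En = orthonormal_eigenvectorsD[OF E]
  define s where "s e = complex_of_real (norm (Y *v e))" for e
  have eigenvalue: "cinner e ((adj Y ** Y) *v e) = s e * s e" for e
    by (simp add: matrix_vector_mul_assoc[symmetric] cinner_adj cinner_self s_def power2_eq_square)
  define P where "P = spectral_sum s E"
  have Pmv: "P *v x = (\<Sum>e\<in>E. (s e * cinner e x) *s e)" for x
    by (simp add: P_def spectral_sum_mult_vector[OF En(1)])
  have "(P ** P) *v x = (adj Y ** Y) *v x" for x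
  proof -
    have "(P ** P) *v x = (\<Sum>e\<in>E. (s e * (s e * cinner e x)) *s e)"
      unfolding matrix_vector_mul_assoc[symmetric] Pmv[of "P *v x"]
      by (rule sum.cong) (auto simp: Pmv cinner_orthonormal_expansion[OF E])
    also have "\<dots> = (adj Y ** Y) *v x"
      by (simp add: eigen_expansion[OF E c, of x] eigenvalue mult.assoc)
    finally show ?thesis .
  qed
  then have "P ** P = adj Y ** Y"
    by (simp add: matrix_eq)
  moreover have "psd P"
  proof (unfold psd_iff_cinner, intro allI)
    fix v
    have "cinner v (P *v v) = (\<Sum>e\<in>E. of_real (norm (Y *v e) * (cmod (cinner e v))\<^sup>2))"
      unfolding Pmv cinner_sum_right[OF En(1)]
      by (rule sum.cong) (auto simp: cinner_smult_right s_def cinner_commute[of v]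
          complex_norm_square[symmetric] mult.assoc simp del: of_real_power)
    then show "Im (cinner v (P *v v)) = 0 \<and> 0 \<le> Re (cinner v (P *v v))"
      by (simp add: Re_sum Im_sum sum_nonneg del: of_real_mult of_real_power)
  qed
  ultimately have "trace_norm Y = Re (trace P)"
    by (intro trace_norm_eqI)
  also have "trace P = (\<Sum>e\<in>E. s e)"
    by (simp add: trace_expansion[OF En(1) c] Pmv cinner_orthonormal_expansion[OF E] En(2))
  finally show ?thesis
    by (simp add: s_def)
qed

lemma norm_eq_1_if_cinner_self:
  assumes "cinner e e = 1"
  shows "norm e = 1"
proof -
  have "(norm e)\<^sup>2 = 1"
    using assms cinner_self[of e] by (metis of_real_eq_1_iff)
  then show ?thesis
    using norm_ge_zero[of e] by (simp add: power2_eq_1_iff)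
qed

lemma obtain_trace_norm_basis:
  fixes Y :: "'n::finite cmat"
  obtains E where "finite E" "card E \<le> DIM(complex^'n)" "complete_system E"
    "\<And>e. e \<in> E \<Longrightarrow> norm e = 1" "trace_norm Y = (\<Sum>e\<in>E. norm (Y *v e))"
proof -
  obtain E where E: "orthonormal_eigenvectors (adj Y ** Y) E" and c: "complete_system E"
    using hermitian_spectral_theorem[of "adj Y ** Y"] by (auto simp: adj_mult)
  show ?thesis
    using that orthonormal_eigenvectorsD(1,2)[OF E] card_orthonormal_eigenvectors_le[OF E] c
      norm_eq_1_if_cinner_self trace_norm_eq_sum_norm[OF E c] by blast
qed

lemma trace_norm_nonneg: "0 \<le> trace_norm Y"
proof -
  obtain E where "trace_norm Y = (\<Sum>e\<in>E. norm (Y *v e))"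
    by (rule obtain_trace_norm_basis[of Y])
  then show ?thesis
    by (simp add: sum_nonneg)
qed

lemma trace_mult_le_onorm_trace_norm:
  fixes M Y :: "'n::finite cmat"
  shows "cmod (trace (M ** Y)) \<le> onorm ((*v) M) * trace_norm Y"
proof -
  obtain E where fin: "finite E" and c: "complete_system E" and unit: "\<And>e. e \<in> E \<Longrightarrow> norm e = 1"
    and tn: "trace_norm Y = (\<Sum>e\<in>E. norm (Y *v e))"
    by (metis obtain_trace_norm_basis)
  have "cmod (trace (M ** Y)) = cmod (\<Sum>e\<in>E. cinner e (M *v (Y *v e)))"
    by (simp add: trace_expansion[OF fin c] matrix_vector_mul_assoc)
  also have "\<dots> \<le> (\<Sum>e\<in>E. cmod (cinner e (M *v (Y *v e))))"
    by (rule norm_sum)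
  also have "\<dots> \<le> (\<Sum>e\<in>E. onorm ((*v) M) * norm (Y *v e))"
  proof (rule sum_mono)
    fix e assume "e \<in> E"
    have "cmod (cinner e (M *v (Y *v e))) \<le> norm e * norm (M *v (Y *v e))"
      by (rule norm_cinner_le)
    also have "\<dots> \<le> onorm ((*v) M) * norm (Y *v e)"
      using onorm[OF matrix_vector_mul_bounded_linear[of M], of "Y *v e"] unit[OF \<open>e \<in> E\<close>]
      by simp
    finally show "cmod (cinner e (M *v (Y *v e))) \<le> onorm ((*v) M) * norm (Y *v e)" .
  qed
  also have "\<dots> = onorm ((*v) M) * trace_norm Y"
    by (simp add: tn sum_distrib_left)
  finally show ?thesis .
qed

section \<open>Trace norm versus operator norm\<close>

definition outer :: "complex^'n::finite \<Rightarrow> complex^'n \<Rightarrow> 'n cmat" where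
  "outer p q = (\<chi> a b. p$a * cnj (q$b))"

lemma outer_mult_vector: "outer p q *v v = cinner q v *s p"
  by (simp add: vec_eq_iff outer_def matrix_vector_mult_def cinner_def sum_distrib_left algebra_simps)

lemma adj_outer: "adj (outer p q) = outer q p"
  by (simp add: vec_eq_iff outer_def adj_def mult.commute)

lemma trace_mult_outer: "trace (M ** outer x w) = cinner w (M *v x)"
  by (simp add: trace_def matrix_matrix_mult_def outer_def cinner_def matrix_vector_mult_def
      sum_distrib_left algebra_simps)

lemma trace_outer: "trace (outer p q) = cinner q p"
  by (simp add: trace_def outer_def cinner_def mult.commute)

lemma trace_norm_zero [simp]: "trace_norm 0 = 0"
  using trace_norm_eqI[of 0 0] by (simp add: psd_def Let_def trace_def)

lemma trace_norm_outer: "trace_norm (outer x w) = norm x * norm w"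
proof (cases "w = 0")
  case True
  then have "outer x w = 0"
    by (simp add: outer_def vec_eq_iff)
  with True show ?thesis
    by simp
next
  case False
  define k where "k = complex_of_real (norm x / norm w)"
  define P where "P = outer (k *s w) w"
  have "psd P"
  proof (unfold psd_iff_cinner, intro allI)
    fix v
    have sq: "z * cnj z = (complex_of_real (cmod z))\<^sup>2" for z
      by (metis complex_norm_square of_real_power)
    have "cinner v (P *v v) = of_real (norm x / norm w * (cmod (cinner w v))\<^sup>2)"
      by (simp add: P_def outer_mult_vector cinner_smult_right k_def cinner_commute[of v w] sq)
    then show "Im (cinner v (P *v v)) = 0 \<and> 0 \<le> Re (cinner v (P *v v))"
      by simp
  qed
  moreover have "P ** P = adj (outer x w) ** outer x w"
  proof -
    have kk: "k * k * cinner w w = cinner x x"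
      using False by (simp add: k_def cinner_self power2_eq_square)
    have "(P ** P) *v v = (adj (outer x w) ** outer x w) *v v" for v
      by (simp add: matrix_vector_mul_assoc[symmetric] P_def adj_outer outer_mult_vector
          cinner_smult_right cinner_smult_left vector_smult_assoc kk[symmetric] algebra_simps)
    then show ?thesis
      by (simp add: matrix_eq)
  qed
  ultimately have "trace_norm (outer x w) = Re (trace P)"
    by (simp add: trace_norm_eqI)
  also have "\<dots> = norm x * norm w"
    using False by (simp add: P_def trace_outer cinner_smult_right k_def cinner_self power2_eq_square)
  finally show ?thesis .
qed

lemma norm_smult_complex: "norm (c *s x) = cmod c * norm (x :: complex^'n::finite)"
proof -
  have "(norm (c *s x))\<^sup>2 = (cmod c * norm x)\<^sup>2"
    by (simp add: norm_vec_square norm_mult power_mult_distrib sum_distrib_left)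
  then show ?thesis
    by (rule power2_eq_imp_eq) simp_all
qed

lemma onorm_outer_le: "onorm ((*v) (outer x w)) \<le> norm x * norm w"
proof (rule onorm_le)
  fix v
  have "norm (outer x w *v v) = cmod (cinner w v) * norm x"
    by (simp add: outer_mult_vector norm_smult_complex)
  also have "\<dots> \<le> norm x * norm w * norm v"
    using mult_left_mono[OF norm_cinner_le[of w v], of "norm x"] by (simp add: ac_simps)
  finally show "norm (outer x w *v v) \<le> norm x * norm w * norm v" .
qed

lemma onorm_le_of_cinner_bound:
  fixes M :: "'n::finite cmat"
  assumes "0 \<le> C" and bound: "\<And>x w. cmod (cinner w (M *v x)) \<le> C * norm x * norm w"
  shows "onorm ((*v) M) \<le> C"
proof (rule onorm_le)
  fix x
  show "norm (M *v x) \<le> C * norm x"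
  proof (cases "M *v x = 0")
    case False
    have "(norm (M *v x))\<^sup>2 \<le> C * norm x * norm (M *v x)"
      using bound[where x=x and w="M *v x"] by (simp add: cinner_self norm_power)
    with False show ?thesis
      by (simp add: power2_eq_square)
  qed (use assms in simp)
qed

lemma onorm_le_of_trace_bound:
  fixes M :: "'n::finite cmat"
  assumes "0 \<le> C" and "\<And>R. cmod (trace (M ** R)) \<le> C * trace_norm R"
  shows "onorm ((*v) M) \<le> C"
proof (rule onorm_le_of_cinner_bound[OF assms(1)])
  fix x w
  show "cmod (cinner w (M *v x)) \<le> C * norm x * norm w"
    using assms(2)[of "outer x w"] by (simp add: trace_mult_outer trace_norm_outer mult.assoc)
qed

lemma onorm_le_trace_norm: "onorm ((*v) Y) \<le> trace_norm (Y :: 'n::finite cmat)"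
proof (rule onorm_le_of_cinner_bound[OF trace_norm_nonneg])
  fix x w :: "complex^'n"
  have "cmod (cinner w (Y *v x)) = cmod (trace (outer x w ** Y))"
    by (simp add: trace_mult_outer trace_mul_sym[of _ Y])
  also have "\<dots> \<le> onorm ((*v) (outer x w)) * trace_norm Y"
    by (rule trace_mult_le_onorm_trace_norm)
  also have "\<dots> \<le> norm x * norm w * trace_norm Y"
    by (rule mult_right_mono[OF onorm_outer_le trace_norm_nonneg])
  finally show "cmod (cinner w (Y *v x)) \<le> trace_norm Y * norm x * norm w"
    by (simp add: ac_simps)
qed

lemma trace_norm_pos:
  fixes Y :: "'n::finite cmat"
  assumes "Y \<noteq> 0"
  shows "0 < trace_norm Y"
proof -
  have "\<not> (\<forall>x. Y *v x = 0)"
    using assms by (simp add: matrix_eq[of Y 0])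
  then have "0 < onorm ((*v) Y)"
    by (simp add: onorm_pos_lt)
  then show ?thesis
    using onorm_le_trace_norm[of Y] by linarith
qed

lemma norm_matrix_vector_mult_le: "norm (Y *v x) \<le> norm Y * norm (x :: complex^'n::finite)"
proof -
  have row: "cmod ((Y *v x)$i) \<le> norm (Y$i) * norm x" for i
  proof -
    have "(Y *v x)$i = cinner (\<chi> j. cnj (Y$i$j)) x"
      by (simp add: matrix_vector_mult_def cinner_def)
    moreover have "norm (\<chi> j. cnj (Y$i$j)) = norm (Y$i)"
      by (simp add: norm_vec_def)
    ultimately show ?thesis
      using norm_cinner_le[of "\<chi> j. cnj (Y$i$j)" x] by simp
  qed
  have "(norm (Y *v x))\<^sup>2 \<le> (\<Sum>i\<in>UNIV. (norm (Y$i) * norm x)\<^sup>2)"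
    unfolding norm_vec_square[of "Y *v x"] by (intro sum_mono power_mono row) simp
  also have "\<dots> = (norm Y * norm x)\<^sup>2"
    by (simp add: power_mult_distrib norm_vec_square[of Y] sum_distrib_right)
  finally show ?thesis
    by (rule power2_le_imp_le) simp
qed

lemma onorm_le_norm_matrix: "onorm ((*v) Y) \<le> norm (Y :: 'n::finite cmat)"
  by (rule onorm_le) (rule norm_matrix_vector_mult_le)

lemma norm_le_sum_norm_nth: "norm (x :: 'a::real_normed_vector^'n::finite) \<le> (\<Sum>i\<in>UNIV. norm (x$i))"
  unfolding norm_vec_def by (rule L2_set_le_sum) simp

lemma norm_matrix_le_onorm: "norm Y \<le> real CARD('n) * real CARD('n) * onorm ((*v) (Y :: 'n::finite cmat))"
proof -
  have "cmod (Y$i$j) \<le> onorm ((*v) Y)" for i j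
  proof -
    have "cmod ((Y *v axis j 1) $ i) \<le> norm (Y *v axis j 1)"
      by (rule Finite_Cartesian_Product.norm_nth_le)
    then have "cmod (Y$i$j) \<le> norm (Y *v axis j 1)"
      by (simp add: matrix_vector_mult_axis_nth)
    also have "\<dots> \<le> onorm ((*v) Y)"
      using onorm[OF matrix_vector_mul_bounded_linear[of Y], of "axis j 1"] by simp
    finally show ?thesis .
  qed
  then have "(\<Sum>i\<in>UNIV. \<Sum>j\<in>UNIV. cmod (Y$i$j)) \<le> (\<Sum>i\<in>(UNIV::'n set). \<Sum>j\<in>(UNIV::'n set). onorm ((*v) Y))"
    by (intro sum_mono)
  moreover have "norm Y \<le> (\<Sum>i\<in>UNIV. \<Sum>j\<in>UNIV. cmod (Y$i$j))"
    by (rule order_trans[OF norm_le_sum_norm_nth]) (intro sum_mono norm_le_sum_norm_nth)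
  ultimately show ?thesis
    by simp
qed

lemma trace_norm_le_onorm: "trace_norm Y \<le> real DIM(complex^'n) * onorm ((*v) (Y :: 'n::finite cmat))"
proof -
  obtain E where "finite E" "card E \<le> DIM(complex^'n)" "\<And>e. e \<in> E \<Longrightarrow> norm e = 1"
    and tn: "trace_norm Y = (\<Sum>e\<in>E. norm (Y *v e))"
    by (metis obtain_trace_norm_basis)
  then have "trace_norm Y \<le> (\<Sum>e\<in>E. onorm ((*v) Y))"
    unfolding tn using onorm[OF matrix_vector_mul_bounded_linear[of Y]]
    by (intro sum_mono) (metis mult.right_neutral)
  also have "\<dots> = real (card E) * onorm ((*v) Y)"
    by simp
  also have "\<dots> \<le> real DIM(complex^'n) * onorm ((*v) Y)"
    using \<open>card E \<le> DIM(complex^'n)\<close> onorm_pos_le[OF matrix_vector_mul_bounded_linear[of Y]]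
    by (simp add: mult_right_mono)
  finally show ?thesis .
qed

text \<open>The trace norm is equivalent to the Frobenius norm, through the operator norm.\<close>

lemma trace_norm_linear_bound:
  fixes F :: "'n::finite cmat \<Rightarrow> 'n cmat"
  assumes "linear F"
  obtains C where "\<And>s. trace_norm (F s) \<le> C * trace_norm s"
proof -
  obtain K where K: "K > 0" "\<And>s. norm (F s) \<le> K * norm s"
    using linear_bounded_pos[OF assms] by blast
  define D where "D = real DIM(complex^'n)"
  define c where "c = real CARD('n) * real CARD('n)"
  have "trace_norm (F s) \<le> (D * K * c) * trace_norm s" for s
  proof -
    have "trace_norm (F s) \<le> D * norm (F s)"
      using trace_norm_le_onorm[of "F s"] onorm_le_norm_matrix[of "F s"]
      unfolding D_def by (meson mult_left_mono of_nat_0_le_iff order_trans)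
    also have "\<dots> \<le> D * (K * (c * trace_norm s))"
    proof -
      have "norm s \<le> c * trace_norm s"
        using norm_matrix_le_onorm[of s] onorm_le_trace_norm[of s] unfolding c_def
        by (meson mult_left_mono of_nat_0_le_iff mult_nonneg_nonneg order_trans)
      then have "norm (F s) \<le> K * (c * trace_norm s)"
        using K by (meson mult_left_mono less_imp_le order_trans)
      then show ?thesis
        unfolding D_def by (simp add: mult_left_mono)
    qed
    finally show ?thesis
      by (simp add: algebra_simps)
  qed
  then show ?thesis
    using that by blast
qed

lemma bdd_above_trace_norm_ratio:
  fixes F :: "'n::finite cmat \<Rightarrow> 'n cmat"
  assumes "linear F"
  shows "bdd_above {trace_norm (F s) / trace_norm s | s. s \<noteq> 0}"
proof -
  obtain C where C: "\<And>s. trace_norm (F s) \<le> C * trace_norm s"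
    using trace_norm_linear_bound[OF assms] by blast
  have "trace_norm (F s) / trace_norm s \<le> C" if "s \<noteq> 0" for s
    using C[of s] trace_norm_pos[OF that] by (simp add: divide_le_eq)
  then show ?thesis
    by (intro bdd_aboveI[where M=C]) auto
qed

lemma norm_11_le:
  fixes F :: "'n::finite cmat \<Rightarrow> 'n cmat"
  assumes "linear F"
  shows "trace_norm (F s) \<le> norm_11 F * trace_norm s"
proof (cases "s = 0")
  case True
  then show ?thesis
    using linear_0[OF assms] trace_norm_pos[of "F s"] by fastforce
next
  case False
  have "trace_norm (F s) / trace_norm s \<le> norm_11 F"
    unfolding norm_11_def by (rule cSup_upper) (use False bdd_above_trace_norm_ratio[OF assms] in auto)
  then show ?thesis
    using trace_norm_pos[OF False] by (simp add: divide_le_eq mult.commute)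
qed

lemma norm_11_nonneg:
  fixes F :: "'n::finite cmat \<Rightarrow> 'n cmat"
  assumes "linear F"
  shows "0 \<le> norm_11 F"
proof -
  have "(mat 1 :: 'n cmat) \<noteq> 0"
    by (simp add: vec_eq_iff mat_def)
  then have "trace_norm (F (mat 1)) / trace_norm (mat 1 :: 'n cmat) \<le> norm_11 F"
    unfolding norm_11_def by (intro cSup_upper bdd_above_trace_norm_ratio[OF assms]) blast
  moreover have "0 \<le> trace_norm (F (mat 1)) / trace_norm (mat 1 :: 'n cmat)"
    by (simp add: trace_norm_nonneg)
  ultimately show ?thesis
    by linarith
qed

lemma one_le_ergodicity_coeff:
  fixes F :: "'n::finite cmat \<Rightarrow> 'n cmat"
  assumes "linear F" and "F X = X" "X \<noteq> 0" "trace X = 0"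
  shows "1 \<le> ergodicity_coeff F"
proof -
  have "1 \<in> {trace_norm (F s) / trace_norm s | s. s \<noteq> 0 \<and> trace s = 0}"
    using assms trace_norm_pos[of X] by (intro CollectI exI[of _ X]) simp
  moreover have "bdd_above {trace_norm (F s) / trace_norm s | s. s \<noteq> 0 \<and> trace s = 0}"
    by (rule bdd_above_mono[OF bdd_above_trace_norm_ratio[OF assms(1)]]) blast
  ultimately show ?thesis
    unfolding ergodicity_coeff_def by (rule cSup_upper)
qed

section \<open>Duals of complex-linear maps and the fundamental channel\<close>

lemma scaleR_eq_cscale: "r *\<^sub>R A = cscale (of_real r) (A::'n::finite cmat)"
  by (simp add: cscale_def vec_eq_iff scaleR_conv_of_real[where 'a=complex])

lemma linear_if_clinear_map: "clinear_map F \<Longrightarrow> linear F"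
  by (rule linearI) (auto simp: clinear_map_def scaleR_eq_cscale)

lemma clinear_map_sum:
  assumes "clinear_map F" "finite K"
  shows "F (\<Sum>k\<in>K. g k) = (\<Sum>k\<in>K. F (g k))"
  using linear_sum[OF linear_if_clinear_map[OF assms(1)]] .

lemma trace_cscale: "trace (cscale c B) = c * trace (B::'n::finite cmat)"
  by (simp add: trace_def cscale_def sum_distrib_left)

lemma matrix_mult_cscale_right: "A ** cscale c B = cscale c (A ** (B::'n::finite cmat))"
  by (simp add: matrix_matrix_mult_def cscale_def vec_eq_iff sum_distrib_left algebra_simps)

lemma matrix_mult_diff_right: "A ** (B - C) = A ** B - A ** (C::'n::finite cmat)"
  by (simp add: matrix_matrix_mult_def vec_eq_iff sum_subtractf algebra_simps)

lemma matrix_mult_diff_left: "(A - B) ** C = A ** C - B ** (C::'n::finite cmat)"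
  by (simp add: matrix_matrix_mult_def vec_eq_iff sum_subtractf algebra_simps)

lemma matrix_mult_sum_right: "A ** (\<Sum>k\<in>K. g k) = (\<Sum>k\<in>K. A ** (g k :: 'n::finite cmat))"
  by (induct K rule: infinite_finite_induct) (simp_all add: matrix_add_ldistrib)

lemma trace_sum: "trace (\<Sum>k\<in>K. g k) = (\<Sum>k\<in>K. trace (g k :: 'n::finite cmat))"
  by (induct K rule: infinite_finite_induct) (simp_all add: trace_add, simp_all add: trace_def)

lemma matrix_unit_expansion: "X = (\<Sum>i\<in>UNIV. \<Sum>j\<in>UNIV. cscale (X$i$j) (outer (axis i 1) (axis j 1)))"
proof -
  have "(\<Sum>i\<in>UNIV. \<Sum>j\<in>UNIV. cscale (X$i$j) (outer (axis i 1) (axis j 1))) $ a $ b = X$a$b" for a b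
  proof -
    have "X$i$j * (axis i 1 $ a * cnj (axis j 1 $ b)) = (if b = j then if a = i then X$i$j else 0 else 0)"
      for i j
      by (simp add: axis_def)
    then have "(\<Sum>j\<in>UNIV. X$i$j * (axis i 1 $ a * cnj (axis j 1 $ b))) = (if a = i then X$i$b else 0)"
      for i
      by simp
    then show ?thesis
      by (simp add: sum_component cscale_def outer_def)
  qed
  then show ?thesis
    by (simp add: vec_eq_iff)
qed

lemma trace_mult_matrix_unit: "trace (M ** outer (axis i 1) (axis j 1)) = M$j$i"
  by (simp add: trace_mult_outer cinner_axis_left matrix_vector_mult_axis_nth)

lemma trace_dual_map:
  fixes F :: "'n::finite cmat \<Rightarrow> 'n cmat"
  assumes F: "clinear_map F"
  shows "trace (dual_map F A ** X) = trace (A ** F X)"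
proof -
  let ?U = "\<lambda>i j. outer (axis i 1) (axis j 1) :: 'n cmat"
  define D :: "'n cmat" where "D = (\<chi> a b. trace (A ** F (?U b a)))"
  have D: "trace (A ** F X) = trace (D ** X)" for X
  proof -
    have "trace (A ** F X) = (\<Sum>i\<in>UNIV. \<Sum>j\<in>UNIV. X$i$j * trace (A ** F (?U i j)))"
      using F by (subst matrix_unit_expansion[of X])
        (simp add: clinear_map_sum matrix_mult_sum_right trace_sum clinear_map_def
          matrix_mult_cscale_right trace_cscale)
    also have "\<dots> = (\<Sum>j\<in>UNIV. \<Sum>i\<in>UNIV. X$i$j * trace (A ** F (?U i j)))"
      by (rule sum.swap)
    also have "\<dots> = trace (D ** X)"
      by (simp add: trace_def matrix_matrix_mult_def D_def mult.commute)
    finally show ?thesis .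
  qed
  have "dual_map F A = D"
    unfolding dual_map_def
  proof (rule the_equality)
    show "\<forall>X. trace (A ** F X) = trace (D ** X)"
      using D by blast
    show "B = D" if "\<forall>X. trace (A ** F X) = trace (B ** X)" for B
      using that D[of "?U _ _"] by (simp add: vec_eq_iff trace_mult_matrix_unit)
  qed
  then show ?thesis
    using D by simp
qed

lemma cscale_0_left [simp]: "cscale 0 A = 0"
  by (simp add: cscale_def vec_eq_iff)

lemma linear_limit_channel: "linear (limit_channel \<rho>)"
  by (rule linearI)
    (simp_all add: limit_channel_def trace_add scaleR_eq_cscale trace_cscale,
     simp_all add: cscale_def vec_eq_iff algebra_simps)

lemma trace_limit_channel: "trace \<rho> = 1 \<Longrightarrow> trace (limit_channel \<rho> X) = trace X"
  by (simp add: limit_channel_def trace_cscale)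

lemma inj_fundamental_generator:
  fixes F :: "'n::finite cmat \<Rightarrow> 'n cmat"
  assumes F: "linear F" and tp: "trace_preserving F" and erg: "ergodicity_coeff F < 1"
    and \<rho>: "trace \<rho> = 1"
  shows "inj (\<lambda>X. X - F X + limit_channel \<rho> X)"
proof -
  have lin: "linear (\<lambda>X. X - F X + limit_channel \<rho> X)"
    by (intro linear_compose_add linear_compose_sub linear_ident F linear_limit_channel)
  have "X = 0" if "X - F X + limit_channel \<rho> X = 0" for X
  proof (rule ccontr)
    assume "X \<noteq> 0"
    have "trace (X - F X + limit_channel \<rho> X) = trace X"
      using tp \<rho> by (simp add: trace_add trace_sub trace_limit_channel trace_preserving_def)
    then have "trace X = 0"
      using that by (simp add: trace_def)
    moreover from this have "F X = X"
      using that by (simp add: limit_channel_def)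
    ultimately have "1 \<le> ergodicity_coeff F"
      using one_le_ergodicity_coeff[OF F] \<open>X \<noteq> 0\<close> by blast
    with erg show False
      by simp
  qed
  then show ?thesis
    using linear_injective_0[OF lin] by blast
qed

lemma fundamental_channel_linear_inverse:
  fixes F :: "'n::finite cmat \<Rightarrow> 'n cmat"
  assumes "linear F" "trace_preserving F" "ergodicity_coeff F < 1" "trace \<rho> = 1"
  shows "linear (fundamental_channel F \<rho>)"
    and "fundamental_channel F \<rho> X - F (fundamental_channel F \<rho> X)
           + limit_channel \<rho> (fundamental_channel F \<rho> X) = X"
proof -
  let ?L = "\<lambda>X. X - F X + limit_channel \<rho> X"
  have lin: "linear ?L"
    by (intro linear_compose_add linear_compose_sub linear_ident assms(1) linear_limit_channel)
  have inj: "inj ?L"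
    by (rule inj_fundamental_generator[OF assms])
  show "linear (fundamental_channel F \<rho>)"
    unfolding fundamental_channel_def by (rule inj_linear_imp_inv_linear[OF lin inj])
  have "surj ?L"
    by (rule linear_injective_imp_surjective[OF lin inj]) simp
  then show "fundamental_channel F \<rho> X - F (fundamental_channel F \<rho> X)
           + limit_channel \<rho> (fundamental_channel F \<rho> X) = X"
    unfolding fundamental_channel_def by (rule surj_f_inv_f)
qed

lemma trace_complement_eq_perturbation:
  fixes F1 F2 :: "'n::finite cmat \<Rightarrow> 'n cmat"
  assumes F2: "clinear_map F2" and tp: "trace_preserving F1" and \<rho>: "trace \<rho> = 1"
    and \<xi>: "dual_map F2 \<xi> = \<xi>" "trace (\<rho> ** \<xi>) = 1"
    and R: "R = W - F1 W + limit_channel \<rho> W"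
  shows "trace ((mat 1 - \<xi>) ** R) = trace (\<xi> ** (F1 W - F2 W))"
proof -
  have "trace R = trace W"
    using tp \<rho> by (simp add: R trace_add trace_sub trace_limit_channel trace_preserving_def)
  moreover have "trace (\<xi> ** R) = trace (\<xi> ** W) - trace (\<xi> ** F1 W) + trace W"
    using \<xi>(2) trace_mul_sym[of \<xi> \<rho>]
    by (simp add: R matrix_add_ldistrib matrix_mult_diff_right trace_add trace_sub limit_channel_def
        matrix_mult_cscale_right trace_cscale)
  moreover have "trace (\<xi> ** W) = trace (\<xi> ** F2 W)"
    using trace_dual_map[OF F2, of \<xi> W] \<xi>(1) by simp
  ultimately show ?thesis
    by (simp add: matrix_mult_diff_left matrix_mult_diff_right trace_sub)
qed

lemma onorm_le_1_plus_onorm_complement: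
  fixes \<xi> :: "'n::finite cmat"
  shows "onorm ((*v) \<xi>) \<le> 1 + onorm ((*v) (mat 1 - \<xi>))"
proof (rule onorm_le)
  fix x :: "complex^'n"
  have "\<xi> *v x = x - (mat 1 - \<xi>) *v x"
    by (simp add: matrix_vector_mult_diff_rdistrib)
  then have "norm (\<xi> *v x) \<le> norm x + norm ((mat 1 - \<xi>) *v x)"
    by (metis norm_triangle_ineq4)
  also have "norm ((mat 1 - \<xi>) *v x) \<le> onorm ((*v) (mat 1 - \<xi>)) * norm x"
    by (rule onorm) simp
  finally show "norm (\<xi> *v x) \<le> (1 + onorm ((*v) (mat 1 - \<xi>))) * norm x"
    by (simp add: algebra_simps)
qed

section \<open>The perturbation bound\<close>

lemma schatten_inf_complement_le:
  fixes F1 F2 Z :: "'n::finite cmat \<Rightarrow> 'n cmat"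
  assumes F2: "clinear_map F2" and tp: "trace_preserving F1" and \<rho>: "trace \<rho> = 1"
    and \<xi>: "dual_map F2 \<xi> = \<xi>" "trace (\<rho> ** \<xi>) = 1"
    and Z: "linear Z" "\<And>R. R = Z R - F1 (Z R) + limit_channel \<rho> (Z R)"
    and G: "linear (\<lambda>X. F1 X - F2 X)"
  shows "schatten_inf (mat 1 - \<xi>)
    \<le> (1 + schatten_inf (mat 1 - \<xi>)) * (norm_11 Z * norm_11 (\<lambda>X. F1 X - F2 X))"
proof -
  define a where "a = norm_11 Z"
  define b where "b = norm_11 (\<lambda>X. F1 X - F2 X)"
  define s where "s = schatten_inf (mat 1 - \<xi>)"
  have "0 \<le> a" "0 \<le> b" "0 \<le> s"
    using norm_11_nonneg Z G by (simp_all add: a_def b_def s_def schatten_inf_def onorm_pos_le)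
  have "cmod (trace ((mat 1 - \<xi>) ** R)) \<le> (1 + s) * (a * b) * trace_norm R" for R
  proof -
    have "trace ((mat 1 - \<xi>) ** R) = trace (\<xi> ** (F1 (Z R) - F2 (Z R)))"
      using F2 tp \<rho> \<xi> Z(2) by (rule trace_complement_eq_perturbation)
    also have "cmod \<dots> \<le> onorm ((*v) \<xi>) * trace_norm (F1 (Z R) - F2 (Z R))"
      by (rule trace_mult_le_onorm_trace_norm)
    also have "\<dots> \<le> (1 + s) * (b * (a * trace_norm R))"
    proof (rule mult_mono)
      show "onorm ((*v) \<xi>) \<le> 1 + s"
        using onorm_le_1_plus_onorm_complement by (simp add: s_def schatten_inf_def)
      show "trace_norm (F1 (Z R) - F2 (Z R)) \<le> b * (a * trace_norm R)"
        using norm_11_le[OF G, of "Z R"] norm_11_le[OF Z(1)] \<open>0 \<le> b\<close>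
        unfolding a_def b_def by (meson mult_left_mono order_trans)
    qed (use \<open>0 \<le> s\<close> trace_norm_nonneg in auto)
    finally show ?thesis
      by (simp add: ac_simps)
  qed
  then have "s \<le> (1 + s) * (a * b)"
    using onorm_le_of_trace_bound[of "(1 + s) * (a * b)" "mat 1 - \<xi>"] \<open>0 \<le> s\<close> \<open>0 \<le> a\<close> \<open>0 \<le> b\<close>
    by (simp add: s_def schatten_inf_def)
  then show ?thesis
    by (simp add: a_def b_def s_def)
qed

theorem mainTheorem7:
  fixes F1 F2 :: "'n::finite cmat \<Rightarrow> 'n cmat" and \<rho>1 \<xi> :: "'n cmat"
  assumes "completely_positive F1" and "completely_positive F2"
    and "spectral_radius_map F1 = 1" and "spectral_radius_map F2 = 1"
    and "trace_preserving F1" and "ergodicity_coeff F1 < 1"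
    and "density \<rho>1" and "F1 \<rho>1 = \<rho>1"
    and "\<forall>\<sigma>. density \<sigma> \<and> F1 \<sigma> = \<sigma> \<longrightarrow> \<sigma> = \<rho>1"
    and "dual_map F2 \<xi> = \<xi>" and "trace (\<rho>1 ** \<xi>) = 1"
    and "norm_11 (fundamental_channel F1 \<rho>1) * norm_11 (\<lambda>X. F1 X - F2 X) < 1"
  shows "schatten_inf (mat 1 - \<xi>) \<le>
    norm_11 (fundamental_channel F1 \<rho>1) * norm_11 (\<lambda>X. F1 X - F2 X) /
    (1 - norm_11 (fundamental_channel F1 \<rho>1) * norm_11 (\<lambda>X. F1 X - F2 X))"
proof -
  have F2: "clinear_map F2" and "linear F1" "linear F2"
    using assms(1,2) by (auto simp: completely_positive_def linear_if_clinear_map)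
  moreover have "trace \<rho>1 = 1"
    using assms(7) by (simp add: density_def)
  ultimately have "schatten_inf (mat 1 - \<xi>) \<le> (1 + schatten_inf (mat 1 - \<xi>)) *
      (norm_11 (fundamental_channel F1 \<rho>1) * norm_11 (\<lambda>X. F1 X - F2 X))"
    using fundamental_channel_linear_inverse[OF \<open>linear F1\<close> assms(5,6)] assms(5,10,11)
    by (intro schatten_inf_complement_le) (auto intro: linear_compose_sub)
  then show ?thesis
    using assms(12) by (simp add: pos_le_divide_eq algebra_simps)
qed

end
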